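(* Let $L=(L_1,\dots,L_N)$ be a contraction path (in the sense of the context), let $\{\phi_{P,q}\}$ be a family of nondecreasing maps $\mathbb{R}_{\ge 0}\to\mathbb{R}_{\ge 0}$ and $\oplus$ an operation as in the context, and let $f$ be the associated tree-separable cost function. Then the procedure $\mathrm{ORDER}(L)$ defined in the context returns a pair $(A,B)$ such that: (i) $A$ is a loop order for $L$ with $f(L,A)=\min_{A'} f(L,A')$, the minimum taken over all loop orders $A'$ for $L$; (ii) $B$ minimizes $f(L,B')$ over all loop orders $B'$ for $L$ whose root differs from the root of $A$ (and $B=\bot$, with cost $+\infty$, if no such loop order exists).
   Context: Indices are abstract symbols. A term is a triple $(K_1,K_2,K_3)$ of finite sets of indices (indices of the two operands and of the output of a pairwise contraction); its index set is $U(K_1,K_2,K_3)=K_1\cup K_2\cup K_3$. A contraction path is a finite sequence $L=(L_1,\dots,L_N)$ of terms with nonempty index sets ($N=0$ allowed). For a term $t$ and index $q$, $t\setminus q$ denotes the term obtained by deleting $q$ from each of its three sets. A loop order for $L$ is a tuple $A=(A_1,\dots,A_N)$ where each $A_i$ is a sequence listing every element of $U(L_i)$ exactly once. For $N\ge1$, the root of $A$ is $q=A_1[1]$. Peeling $A$: let $r$ be the largest integer with $A_1[1]=\dots=A_r[1]=q$. Then $L^{(1)}$ is the sequence $(L_1\setminus q,\dots,L_r\setminus q)$ with terms having empty index set deleted, and $A^{(1)}$ is the corresponding loop order for $L^{(1)}$ consisting of the sequences $A_i[2:]$ ($A_i$ with its first element removed) for those $i\le r$ with $|A_i|\ge2$;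 also $L^{(2)}=(L_{r+1},\dots,L_N)$ and $A^{(2)}=(A_{r+1},\dots,A_N)$. Cost function: let $\oplus$ be an associative binary operation on $\mathbb{R}_{\ge0}$ (extended to $+\infty$ in the obvious monotone way) that is nondecreasing in each argument and has $0$ as identity (e.g. $+$ or $\max$). For every contraction path $P$ and index $q$ let $\phi_{P,q}:\mathbb{R}_{\ge0}\to\mathbb{R}_{\ge0}$ be nondecreasing. The tree-separable cost $f$ is defined recursively by $f(L,A)=0$ if $N=0$, and otherwise $f(L,A)=\phi_{(L_1,\dots,L_r),q}\big(f(L^{(1)},A^{(1)})\big)\oplus f(L^{(2)},A^{(2)})$, with $q,r,L^{(i)},A^{(i)}$ from peeling. (Thus $\phi$ is applied at each loop of the fully fused loop-nest forest obtained by fusing common leading indices of consecutive terms, and costs of sibling subtrees are combined by $\oplus$.) Procedure $\mathrm{ORDER}(L)$: if $N=0$, return $(\emptyset,\bot)$ where $\emptyset$ is the empty loop order (cost $0$) and $\bot$ means "no order" (cost $+\infty$). Otherwise, for each $q\in U(L_1)$, let $k$ be the largest integer with $q\in U(L_i)$ for all $i\le k$; for each $s=1,\dots,k$: let $X$ be $(L_1\setminus q,\dots,L_s\setminus q)$ with empty-index-set terms deleted, and $Y=(L_{s+1},\dots,L_N)$; compute $(A^X,\cdot)=\mathrm{ORDER}(X)$ and $(\bar A^Y,\bar B^Y)=\mathrm{ORDER}(Y)$; set $A^Y=\bar B^Y$ if $Y$ is nonempty and the root of $\bar A^Y$ is $q$, and $A^Y=\bar A^Y$ otherwise. The candidate order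 $C_{q,s}$ has, for $i\le s$, $i$-th sequence equal to $q$ followed by the sequence for $L_i\setminus q$ in $A^X$ (just $(q)$ if that term was deleted), followed by the sequences of $A^Y$; its value is $\delta_{q,s}=\phi_{(L_1,\dots,L_s),q}\big(f(X,A^X)\big)\oplus f(Y,A^Y)$ (taken as $+\infty$ if $A^Y=\bot$). For each $q$ let $C_q$ be a candidate $C_{q,s}$ of minimal $\delta_{q,s}$. Return $A=C_{q^*}$ for a $q^*$ minimizing this value, and $B=C_{q'}$ for $q'\neq q^*$ minimizing this value among the remaining $q$ (or $\bot$ if $U(L_1)=\{q^*\}$). *)

theory Defs
  imports Complex_Main "HOL-Library.Extended_Nonnegative_Real"
begin

type_synonym 'i cterm = "'i set \<times> 'i set \<times> 'i set"

definition U :: "'i cterm \<Rightarrow> 'i set" where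
  "U t = (case t of (K1, K2, K3) \<Rightarrow> K1 \<union> K2 \<union> K3)"

definition del :: "'i cterm \<Rightarrow> 'i \<Rightarrow> 'i cterm" where
  "del t q = (case t of (K1, K2, K3) \<Rightarrow> (K1 - {q}, K2 - {q}, K3 - {q}))"

definition is_path :: "'i cterm list \<Rightarrow> bool" where
  "is_path L \<longleftrightarrow> (\<forall>t\<in>set L. finite (fst t) \<and> finite (fst (snd t)) \<and> finite (snd (snd t))
                      \<and> U t \<noteq> {})"

definition is_loop_order :: "'i cterm list \<Rightarrow> 'i list list \<Rightarrow> bool" where
  "is_loop_order L A \<longleftrightarrow> length A = length L \<and>
     (\<forall>i<length L. distinct (A ! i) \<and> set (A ! i) = U (L ! i))"

definition root :: "'i list list \<Rightarrow> 'i" where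
  "root A = hd (hd A)"

function tcost :: "('i cterm list \<Rightarrow> 'i \<Rightarrow> real \<Rightarrow> real) \<Rightarrow> (real \<Rightarrow> real \<Rightarrow> real)
    \<Rightarrow> 'i cterm list \<Rightarrow> 'i list list \<Rightarrow> real" where
  "tcost phi opl L [] = 0"
| "tcost phi opl L (a # As) =
    (let q = hd a;
         r = length (takeWhile (\<lambda>b. hd b = q) (a # As))
     in opl (phi (take r L) q
               (tcost phi opl (filter (\<lambda>t. U t \<noteq> {}) (map (\<lambda>t. del t q) (take r L)))
                              (filter (\<lambda>b. b \<noteq> []) (map tl (take r (a # As))))))
            (tcost phi opl (drop r L) (drop r (a # As))))"
  by pat_completeness auto
termination
proof (relation "measure (\<lambda>(phi, opl, L, A). sum_list (map length A) + length A)")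
  show "wf (measure (\<lambda>(phi, opl, L, A). sum_list (map length A) + length A))" by simp
next
  fix phi :: "'i cterm list \<Rightarrow> 'i \<Rightarrow> real \<Rightarrow> real" and opl and L and a :: "'i list" and As x xa
  assume x: "x = hd a" and xa: "xa = length (takeWhile (\<lambda>b. hd b = x) (a # As))"
  have r1: "xa \<ge> 1" using x xa by simp
  define T where "T = take xa (a # As)"
  have len: "\<And>M :: 'i list list. sum_list (map length (filter (\<lambda>b. b \<noteq> []) (map tl M)))
        + length (filter (\<lambda>b. b \<noteq> []) (map tl M)) \<le> sum_list (map length M)"
  proof -
    fix M :: "'i list list"
    show "sum_list (map length (filter (\<lambda>b. b \<noteq> []) (map tl M)))
        + length (filter (\<lambda>b. b \<noteq> []) (map tl M)) \<le> sum_list (map length M)"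
      proof (induction M)
      case (Cons a M)
      then show ?case by (cases a) auto
    qed simp
  qed
  have "sum_list (map length T) + 0 < sum_list (map length (a # As)) + length (a # As)"
  proof -
    have "sum_list (map length T) \<le> sum_list (map length (a # As))"
      unfolding T_def
      by (metis append_take_drop_id le_add1 map_append sum_list_append)
    then show ?thesis by simp
  qed
  then show "((phi, opl, filter (\<lambda>t. U t \<noteq> {}) (map (\<lambda>t. del t x) (take xa L)),
              filter (\<lambda>b. b \<noteq> []) (map tl (take xa (a # As)))), phi, opl, L, a # As)
         \<in> measure (\<lambda>(phi, opl, L, A). sum_list (map length A) + length A)"
    using len[of T] unfolding T_def by simp
next
  fix phi :: "'i cterm list \<Rightarrow> 'i \<Rightarrow> real \<Rightarrow> real" and opl and L and a :: "'i list" and As x xa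
  assume x: "x = hd a" and xa: "xa = length (takeWhile (\<lambda>b. hd b = x) (a # As))"
  have r1: "xa \<ge> 1" using x xa by simp
  have "sum_list (map length (drop xa (a # As))) \<le> sum_list (map length (a # As))"
    by (metis append_take_drop_id le_add2 map_append sum_list_append)
  moreover have "length (drop xa (a # As)) < length (a # As)" using r1 by simp
  ultimately show "((phi, opl, drop xa L, drop xa (a # As)), phi, opl, L, a # As)
         \<in> measure (\<lambda>(phi, opl, L, A). sum_list (map length A) + length A)" by simp
qed

section \<open>The procedure ORDER, as a relation describing all its possible outputs
  (arbitrary tie-breaking among minimizers). None encodes \<bottom>.\<close>

definition kof :: "'i cterm list \<Rightarrow> 'i \<Rightarrow> nat" where
  "kof L q = length (takeWhile (\<lambda>t. q \<in> U t) L)"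

definition Xof :: "'i cterm list \<Rightarrow> 'i \<Rightarrow> nat \<Rightarrow> 'i cterm list" where
  "Xof L q s = filter (\<lambda>t. U t \<noteq> {}) (map (\<lambda>t. del t q) (take s L))"

definition Yof :: "'i cterm list \<Rightarrow> nat \<Rightarrow> 'i cterm list" where
  "Yof L s = drop s L"

text \<open>A^Y: the second-best order of Y if Y is nonempty and the best one has root q.\<close>
definition adjY :: "'i \<Rightarrow> 'i cterm list \<Rightarrow> 'i list list \<Rightarrow> 'i list list option
    \<Rightarrow> 'i list list option" where
  "adjY q Y AbarY BbarY = (if Y \<noteq> [] \<and> root AbarY = q then BbarY else Some AbarY)"

text \<open>Re-insert empty sequences for the terms that were deleted from X.\<close>
fun reinsert :: "'i cterm list \<Rightarrow> 'i list list \<Rightarrow> 'i list list" where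
  "reinsert [] As = []"
| "reinsert (t # ts) As =
     (if U t = {} then [] # reinsert ts As else hd As # reinsert ts (tl As))"

definition cand :: "'i cterm list \<Rightarrow> 'i \<Rightarrow> nat \<Rightarrow> 'i list list \<Rightarrow> 'i list list option
    \<Rightarrow> 'i list list option" where
  "cand L q s AX AY =
     map_option (\<lambda>ay. map (Cons q) (reinsert (map (\<lambda>t. del t q) (take s L)) AX) @ ay) AY"

definition dval :: "('i cterm list \<Rightarrow> 'i \<Rightarrow> real \<Rightarrow> real) \<Rightarrow> (real \<Rightarrow> real \<Rightarrow> real)
    \<Rightarrow> 'i cterm list \<Rightarrow> 'i \<Rightarrow> nat \<Rightarrow> 'i list list \<Rightarrow> 'i list list option \<Rightarrow> ennreal" where
  "dval phi opl L q s AX AY =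
     (case AY of None \<Rightarrow> \<infinity>
      | Some ay \<Rightarrow> ennreal (opl (phi (take s L) q (tcost phi opl (Xof L q s) AX))
                                (tcost phi opl (Yof L s) ay)))"

inductive ORDER :: "('i cterm list \<Rightarrow> 'i \<Rightarrow> real \<Rightarrow> real) \<Rightarrow> (real \<Rightarrow> real \<Rightarrow> real)
    \<Rightarrow> 'i cterm list \<Rightarrow> 'i list list \<Rightarrow> 'i list list option \<Rightarrow> bool"
  for phi opl where
  ORDER_Nil: "ORDER phi opl [] [] None"
| ORDER_Cons:
  "\<lbrakk> L = t # Ls;
     \<comment> \<open>recursive calls for every q in U(L_1) and every s in 1..k\<close>
     \<forall>q s. q \<in> U t \<and> 1 \<le> s \<and> s \<le> kof L q \<longrightarrow>
        ORDER phi opl (Xof L q s) (AX q s) (BX q s) \<and>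
        ORDER phi opl (Yof L s) (AbY q s) (BbY q s);
     \<comment> \<open>C_q: a candidate C_{q,s} of minimal delta\<close>
     \<forall>q\<in>U t. 1 \<le> sq q \<and> sq q \<le> kof L q \<and>
        (\<forall>s. 1 \<le> s \<and> s \<le> kof L q \<longrightarrow>
           dval phi opl L q (sq q) (AX q (sq q)) (adjY q (Yof L (sq q)) (AbY q (sq q)) (BbY q (sq q)))
           \<le> dval phi opl L q s (AX q s) (adjY q (Yof L s) (AbY q s) (BbY q s)));
     \<comment> \<open>q*: minimizing value of C_q\<close>
     qs \<in> U t;
     \<forall>q\<in>U t.
        dval phi opl L qs (sq qs) (AX qs (sq qs)) (adjY qs (Yof L (sq qs)) (AbY qs (sq qs)) (BbY qs (sq qs)))
        \<le> dval phi opl L q (sq q) (AX q (sq q)) (adjY q (Yof L (sq q)) (AbY q (sq q)) (BbY q (sq q)));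
     cand L qs (sq qs) (AX qs (sq qs)) (adjY qs (Yof L (sq qs)) (AbY qs (sq qs)) (BbY qs (sq qs)))
       = Some A;
     \<comment> \<open>B = C_{q'} for a minimizing q' \<noteq> q*, or \<bottom> if U(L_1) = {q*}\<close>
     (U t = {qs} \<and> B = None) \<or>
     (\<exists>q'. q' \<in> U t \<and> q' \<noteq> qs \<and>
        (\<forall>q\<in>U t - {qs}.
          dval phi opl L q' (sq q') (AX q' (sq q')) (adjY q' (Yof L (sq q')) (AbY q' (sq q')) (BbY q' (sq q')))
          \<le> dval phi opl L q (sq q) (AX q (sq q)) (adjY q (Yof L (sq q)) (AbY q (sq q)) (BbY q (sq q)))) \<and>
        B = cand L q' (sq q') (AX q' (sq q')) (adjY q' (Yof L (sq q')) (AbY q' (sq q')) (BbY q' (sq q'))))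
   \<rbrakk> \<Longrightarrow> ORDER phi opl L A B"

end

theory Submission
  imports Defs
begin

text \<open>A loop order splits at its root q: the leading terms whose nests start with q form, after
  removing q, a loop order of X = (L1\<setminus>q, \<dots>, Lr\<setminus>q), and the remaining sequences form a loop
  order of Y = (L(r+1), \<dots>, LN) whose root is not q (r is maximal); the cost is
  \<phi>(f(X,\<cdot>)) \<oplus> f(Y,\<cdot>), and conversely every such pair assembles into a loop order with root q.
  Because \<phi> and \<oplus> are monotone, for fixed q and r the cost is minimised by an optimal order
  of X together with the cheapest order of Y whose root is not q; that is the optimal order of Y
  unless its root is q, and the second one returned for Y otherwise. Hence, by induction on the
  total number of index occurrences, the candidate C_q is optimal among the loop orders with
  root q, and the best and second best candidates realise (i) and (ii).\<close>

definition lists_indices :: "'i cterm \<Rightarrow> 'i list \<Rightarrow> bool" where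
  "lists_indices t b \<longleftrightarrow> distinct b \<and> set b = U t"

lemma is_loop_order_iff_list_all2: "is_loop_order L A \<longleftrightarrow> list_all2 lists_indices L A"
  unfolding is_loop_order_def list_all2_conv_all_nth lists_indices_def by auto

lemma U_del: "U (del t q) = U t - {q}"
  unfolding U_def del_def by (cases t) auto

lemma lists_indices_Nil_iff: "lists_indices t b \<Longrightarrow> b = [] \<longleftrightarrow> U t = {}"
  unfolding lists_indices_def by auto

lemma list_all2_filter_nonempty:
  "list_all2 lists_indices ts bs \<Longrightarrow>
   list_all2 lists_indices (filter (\<lambda>t. U t \<noteq> {}) ts) (filter (\<lambda>b. b \<noteq> []) bs)"
  by (induction rule: list_all2_induct) (auto dest: lists_indices_Nil_iff)

lemma length_reinsert: "length (reinsert ts bs) = length ts"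
  by (induction ts arbitrary: bs) auto

lemma reinsert_lists_indices:
  "list_all2 lists_indices (filter (\<lambda>t. U t \<noteq> {}) ts) bs \<Longrightarrow>
   list_all2 lists_indices ts (reinsert ts bs) \<and> filter (\<lambda>b. b \<noteq> []) (reinsert ts bs) = bs"
proof (induction ts arbitrary: bs)
  case (Cons t ts)
  show ?case
  proof (cases "U t = {}")
    case True
    then show ?thesis using Cons by (simp add: lists_indices_def)
  next
    case False
    then obtain b bs' where bs: "bs = b # bs'" "lists_indices t b"
      "list_all2 lists_indices (filter (\<lambda>t. U t \<noteq> {}) ts) bs'"
      using Cons.prems by (auto simp: list_all2_Cons1)
    then have "b \<noteq> []" using False lists_indices_Nil_iff by blast
    then show ?thesis using Cons.IH[OF bs(3)] bs False by simp
  qed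
qed simp

lemma lists_indices_map_Cons:
  "list_all2 lists_indices (map (\<lambda>t. del t q) ts) bs \<Longrightarrow> \<forall>t\<in>set ts. q \<in> U t \<Longrightarrow>
   list_all2 lists_indices ts (map (Cons q) bs)"
proof (induction ts arbitrary: bs)
  case (Cons t ts)
  then obtain b bs' where "bs = b # bs'" "lists_indices (del t q) b"
    "list_all2 lists_indices (map (\<lambda>t. del t q) ts) bs'"
    by (auto simp: list_all2_Cons1)
  then show ?case using Cons by (auto simp: lists_indices_def U_del)
qed simp

lemma kof_le_length: "kof L q \<le> length L"
  unfolding kof_def by (rule length_takeWhile_le)

lemma mem_U_take_kof:
  assumes "s \<le> kof L q" and "t \<in> set (take s L)"
  shows "q \<in> U t"
proof -
  have "take s L = take s (takeWhile (\<lambda>t. q \<in> U t) L)"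
    using assms(1) unfolding kof_def by (metis min.absorb1 take_take takeWhile_eq_take)
  then show ?thesis using assms(2) by (metis in_set_takeD set_takeWhileD)
qed

lemma root_mem_U_hd:
  assumes "list_all2 lists_indices (t # ts) A" and "U t \<noteq> {}"
  shows "root A \<in> U t"
proof -
  obtain b bs where A: "A = b # bs" and b: "lists_indices t b"
    using assms(1) by (auto simp: list_all2_Cons1)
  have "b \<noteq> []" using lists_indices_Nil_iff[OF b] assms(2) by simp
  then have "hd b \<in> set b" by simp
  then show ?thesis using A b unfolding root_def lists_indices_def by simp
qed

lemma is_path_U: "is_path L \<Longrightarrow> t \<in> set L \<Longrightarrow> finite (U t) \<and> U t \<noteq> {}"
  unfolding is_path_def U_def by (cases t) auto

lemma is_path_Xof: "is_path L \<Longrightarrow> is_path (Xof L q s)"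
  unfolding is_path_def Xof_def
  by (auto simp: del_def split: prod.splits dest!: in_set_takeD)

lemma is_path_Yof: "is_path L \<Longrightarrow> is_path (Yof L s)"
  unfolding is_path_def Yof_def by (meson in_set_dropD)

lemma lists_indices_map_tl:
  "list_all2 lists_indices ts bs \<Longrightarrow> \<forall>b\<in>set bs. hd b = q \<Longrightarrow> \<forall>t\<in>set ts. U t \<noteq> {} \<Longrightarrow>
   list_all2 lists_indices (map (\<lambda>t. del t q) ts) (map tl bs) \<and> (\<forall>t\<in>set ts. q \<in> U t)"
proof (induction rule: list_all2_induct)
  case (Cons t ts b bs)
  then have "b \<noteq> []" using lists_indices_Nil_iff[OF Cons(1)] by simp
  then obtain c where b: "b = q # c" using Cons.prems(1) by (cases b) auto
  then have "lists_indices (del t q) c \<and> q \<in> U t"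
    using Cons(1) unfolding lists_indices_def U_del by auto
  then show ?case using Cons b by simp
qed simp

lemma le_kof:
  assumes "r \<le> length L" and "\<forall>t\<in>set (take r L). q \<in> U t"
  shows "r \<le> kof L q"
  unfolding kof_def
proof (rule length_takeWhile_less_P_nth[OF _ assms(1)])
  fix i assume "i < r"
  then show "q \<in> U (L ! i)" using assms by (metis length_take min.absorb2 nth_mem nth_take)
qed

lemma loop_order_peel:
  assumes A: "list_all2 lists_indices L A" and L: "L = t # ts" and path: "is_path L"
  obtains q r where "q = root A" "q \<in> U t" "1 \<le> r" "r \<le> kof L q"
    "list_all2 lists_indices (Xof L q r) (filter (\<lambda>b. b \<noteq> []) (map tl (take r A)))"
    "list_all2 lists_indices (Yof L r) (drop r A)"
    "Yof L r \<noteq> [] \<Longrightarrow> root (drop r A) \<noteq> q"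
    "tcost phi opl L A = opl (phi (take r L) q (tcost phi opl (Xof L q r)
        (filter (\<lambda>b. b \<noteq> []) (map tl (take r A))))) (tcost phi opl (Yof L r) (drop r A))"
proof -
  obtain a as where Aa: "A = a # as" using A L by (auto simp: list_all2_Cons1)
  define q where "q = hd a"
  define r where "r = length (takeWhile (\<lambda>b. hd b = q) A)"
  have len: "length A = length L" using list_all2_lengthD[OF A] by simp
  have r1: "1 \<le> r" unfolding r_def q_def Aa by simp
  have rl: "r \<le> length L" unfolding r_def using len by (metis length_takeWhile_le)
  have "take r A = takeWhile (\<lambda>b. hd b = q) A" unfolding r_def by (rule takeWhile_eq_take[symmetric])
  then have "\<forall>b\<in>set (take r A). hd b = q" by (auto dest: set_takeWhileD)
  moreover have "\<forall>t\<in>set (take r L). U t \<noteq> {}" using is_path_U[OF path] by (auto dest: in_set_takeD)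
  ultimately have X0: "list_all2 lists_indices (map (\<lambda>t. del t q) (take r L)) (map tl (take r A))"
    and qU: "\<forall>t\<in>set (take r L). q \<in> U t"
    using lists_indices_map_tl[OF list_all2_takeI[OF A]] by blast+
  have rk: "r \<le> kof L q" by (rule le_kof[OF rl qU])
  have "Yof L r \<noteq> [] \<Longrightarrow> root (drop r A) \<noteq> q"
  proof -
    assume "Yof L r \<noteq> []"
    then have "r < length A" unfolding Yof_def using len by simp
    moreover from this have "hd (A ! r) \<noteq> q" unfolding r_def by (rule nth_length_takeWhile)
    ultimately show "root (drop r A) \<noteq> q" unfolding root_def by (simp add: hd_drop_conv_nth)
  qed
  moreover have "tcost phi opl L A = opl (phi (take r L) q (tcost phi opl (Xof L q r)
      (filter (\<lambda>b. b \<noteq> []) (map tl (take r A))))) (tcost phi opl (Yof L r) (drop r A))"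
    unfolding Aa r_def q_def Xof_def Yof_def by (subst tcost.simps(2)) (simp only: Let_def)
  moreover have "q = root A" unfolding root_def q_def Aa by simp
  moreover have "q \<in> U t" using qU r1 L by (cases r) auto
  ultimately show ?thesis
    using that r1 rk list_all2_filter_nonempty[OF X0] list_all2_dropI[OF A]
    unfolding Xof_def Yof_def by blast
qed

lemma candidate_assembles:
  assumes s: "1 \<le> s" "s \<le> kof L q"
    and X: "list_all2 lists_indices (Xof L q s) AX" and Y: "list_all2 lists_indices (Yof L s) ay"
    and Y_root: "Yof L s \<noteq> [] \<Longrightarrow> root ay \<noteq> q"
    and C: "cand L q s AX (Some ay) = Some C"
  shows "list_all2 lists_indices L C \<and> root C = q \<and>
    tcost phi opl L C = opl (phi (take s L) q (tcost phi opl (Xof L q s) AX)) (tcost phi opl (Yof L s) ay)"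
proof -
  define M where "M = map (\<lambda>t. del t q) (take s L)"
  define F where "F = map (Cons q) (reinsert M AX)"
  have C_eq: "C = F @ ay" using C unfolding cand_def F_def M_def by simp
  have sl: "s \<le> length L" using s(2) kof_le_length[of L q] by linarith
  have "Xof L q s = filter (\<lambda>t. U t \<noteq> {}) M" unfolding Xof_def M_def by simp
  then have M: "list_all2 lists_indices M (reinsert M AX)" "filter (\<lambda>b. b \<noteq> []) (reinsert M AX) = AX"
    using reinsert_lists_indices X by metis+
  have "list_all2 lists_indices (take s L) F" unfolding F_def
    by (rule lists_indices_map_Cons) (use M M_def mem_U_take_kof[OF s(2)] in auto)
  then have lists: "list_all2 lists_indices L C"
    using list_all2_appendI[OF _ Y[unfolded Yof_def]] C_eq by fastforce
  have lF: "length F = s" unfolding F_def M_def using sl by (simp add: length_reinsert)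
  obtain f fs where F: "F = f # fs" using lF s(1) by (cases F) auto
  have hd_F: "\<forall>x\<in>set F. hd x = q" unfolding F_def by auto
  then have hd_f: "hd f = q" using F by simp
  have "takeWhile (\<lambda>b. hd b = q) ay = []"
  proof (cases ay)
    case (Cons b bs)
    then have "Yof L s \<noteq> []" using list_all2_lengthD[OF Y] by auto
    then show ?thesis using Y_root Cons unfolding root_def by simp
  qed simp
  then have "length (takeWhile (\<lambda>b. hd b = q) (F @ ay)) = s"
    using hd_F lF by (simp add: takeWhile_append2)
  then have r: "length (takeWhile (\<lambda>b. hd b = q) (f # fs @ ay)) = s" using F by simp
  have "tcost phi opl L (f # fs @ ay) = opl (phi (take s L) q
      (tcost phi opl (filter (\<lambda>t. U t \<noteq> {}) M) (filter (\<lambda>b. b \<noteq> []) (map tl (take s (F @ ay))))))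
      (tcost phi opl (drop s L) (drop s (F @ ay)))"
    unfolding tcost.simps(2) Let_def hd_f r F M_def by simp
  also have "\<dots> = opl (phi (take s L) q (tcost phi opl (Xof L q s) AX)) (tcost phi opl (Yof L s) ay)"
    using lF M(2) unfolding F_def Xof_def Yof_def M_def by (simp add: comp_def)
  finally show ?thesis using lists C_eq F hd_f unfolding root_def by simp
qed

definition index_count :: "'i cterm list \<Rightarrow> nat" where
  "index_count L = (\<Sum>t\<leftarrow>L. card (U t))"

lemma index_count_append: "index_count (L @ M) = index_count L + index_count M"
  unfolding index_count_def by simp

lemma index_count_filter_nonempty: "index_count (filter (\<lambda>t. U t \<noteq> {}) L) = index_count L"
  unfolding index_count_def by (induction L) auto

lemma index_count_map_del:
  "\<forall>t\<in>set L. q \<in> U t \<and> finite (U t) \<Longrightarrow> index_count (map (\<lambda>t. del t q) L) + length L = index_count L"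
  unfolding index_count_def
proof (induction L)
  case (Cons t L)
  then have "card (U t) \<ge> 1" by (auto simp: Suc_le_eq card_gt_0_iff)
  then show ?case using Cons by (simp add: U_del)
qed simp

lemma index_count_Xof_less:
  assumes "is_path L" "1 \<le> s" "s \<le> kof L q"
  shows "index_count (Xof L q s) < index_count L"
proof -
  have "s \<le> length L" using assms(3) kof_le_length[of L q] by linarith
  moreover have "\<forall>t\<in>set (take s L). q \<in> U t \<and> finite (U t)"
    using mem_U_take_kof[OF assms(3)] is_path_U[OF assms(1)] by (meson in_set_takeD)
  ultimately have "index_count (map (\<lambda>t. del t q) (take s L)) + s = index_count (take s L)"
    using index_count_map_del[of "take s L" q] by simp
  then show ?thesis using assms(2) index_count_append[of "take s L" "drop s L"]
    unfolding Xof_def index_count_filter_nonempty by simp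
qed

lemma index_count_Yof_less:
  assumes "is_path L" "1 \<le> s" "s \<le> length L"
  shows "index_count (Yof L s) < index_count L"
proof -
  obtain t ts where L: "L = t # ts" using assms by (cases L) auto
  then have "card (U t) > 0" using is_path_U[OF assms(1)] by (simp add: card_gt_0_iff)
  moreover have "take s L = t # take (s - 1) ts" using L assms(2) by (cases s) auto
  ultimately have "index_count (take s L) > 0" unfolding index_count_def by simp
  then show ?thesis using index_count_append[of "take s L" "drop s L"] unfolding Yof_def by simp
qed

lemma tcost_nonneg:
  assumes "\<And>P q x. 0 \<le> x \<Longrightarrow> 0 \<le> phi P q x" and "\<And>x y. 0 \<le> x \<Longrightarrow> 0 \<le> y \<Longrightarrow> 0 \<le> opl x y"
  shows "0 \<le> tcost phi opl L A"
  using assms by (induction phi opl L A rule: tcost.induct) (simp_all add: Let_def)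

definition optimal_pair :: "('i cterm list \<Rightarrow> 'i \<Rightarrow> real \<Rightarrow> real) \<Rightarrow> (real \<Rightarrow> real \<Rightarrow> real)
    \<Rightarrow> 'i cterm list \<Rightarrow> 'i list list \<Rightarrow> 'i list list option \<Rightarrow> bool" where
  "optimal_pair phi opl L A B \<longleftrightarrow>
     (is_loop_order L A \<and> (\<forall>A'. is_loop_order L A' \<longrightarrow> tcost phi opl L A \<le> tcost phi opl L A')) \<and>
     (case B of
        None \<Rightarrow> \<not> (\<exists>B'. is_loop_order L B' \<and> root B' \<noteq> root A)
      | Some B0 \<Rightarrow> is_loop_order L B0 \<and> root B0 \<noteq> root A \<and>
          (\<forall>B'. is_loop_order L B' \<and> root B' \<noteq> root A \<longrightarrow> tcost phi opl L B0 \<le> tcost phi opl L B'))"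

lemma optimal_pair_adjY:
  assumes "optimal_pair phi opl Y A B"
  shows "case adjY q Y A B of
      None \<Rightarrow> \<not> (\<exists>C'. is_loop_order Y C' \<and> (Y \<noteq> [] \<longrightarrow> root C' \<noteq> q))
    | Some C \<Rightarrow> is_loop_order Y C \<and> (Y \<noteq> [] \<longrightarrow> root C \<noteq> q) \<and>
        (\<forall>C'. is_loop_order Y C' \<and> (Y \<noteq> [] \<longrightarrow> root C' \<noteq> q) \<longrightarrow> tcost phi opl Y C \<le> tcost phi opl Y C')"
proof (cases "Y \<noteq> [] \<and> root A = q")
  case True
  then show ?thesis using assms unfolding optimal_pair_def adjY_def
    by (cases B) simp_all
next
  case False
  then show ?thesis using assms unfolding optimal_pair_def adjY_def by auto
qed

lemma adjY_Yof_kof: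
  assumes path: "is_path L" and A: "is_loop_order (Yof L (kof L q)) A"
  shows "adjY q (Yof L (kof L q)) A B = Some A"
proof (cases "Yof L (kof L q) = []")
  case False
  define k where "k = kof L q"
  then have k: "k < length L" using False unfolding Yof_def by simp
  then have "q \<notin> U (L ! k)" unfolding k_def kof_def by (rule nth_length_takeWhile)
  moreover have "root A \<in> U (L ! k)"
  proof (rule root_mem_U_hd)
    show "list_all2 lists_indices (L ! k # drop (Suc k) L) A"
      using A k unfolding is_loop_order_iff_list_all2 Yof_def k_def[symmetric]
      by (simp add: Cons_nth_drop_Suc)
    show "U (L ! k) \<noteq> {}" using is_path_U[OF path] k by simp
  qed
  ultimately show ?thesis unfolding adjY_def k_def by auto
qed (simp add: adjY_def)

lemma candidate_attains_dval:
  assumes s: "1 \<le> s" "s \<le> kof L q"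
    and X: "is_loop_order (Xof L q s) AX" and Y: "optimal_pair phi opl (Yof L s) Ab Bb"
    and C: "cand L q s AX (adjY q (Yof L s) Ab Bb) = Some C"
  shows "is_loop_order L C \<and> root C = q \<and>
    ennreal (tcost phi opl L C) = dval phi opl L q s AX (adjY q (Yof L s) Ab Bb)"
proof -
  obtain ay where ay: "adjY q (Yof L s) Ab Bb = Some ay" using C unfolding cand_def by auto
  then have "is_loop_order (Yof L s) ay \<and> (Yof L s \<noteq> [] \<longrightarrow> root ay \<noteq> q)"
    using optimal_pair_adjY[OF Y, of q] by simp
  then show ?thesis
    using candidate_assembles[OF s X[unfolded is_loop_order_iff_list_all2], of ay C phi opl] C ay
    unfolding is_loop_order_iff_list_all2 dval_def by simp
qed

lemma least_candidate_optimal: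
  fixes cost :: "'a \<Rightarrow> real" and D :: "'q \<Rightarrow> ennreal"
  assumes lower: "\<And>a. S a \<Longrightarrow> rt a \<in> Q \<and> D (rt a) \<le> ennreal (cost a)"
    and attained: "\<And>p c. p \<in> Q \<Longrightarrow> C p = Some c \<Longrightarrow> S c \<and> rt c = p \<and> ennreal (cost c) = D p"
    and unattained: "\<And>p. C p = None \<Longrightarrow> D p = \<infinity>"
    and nonneg: "\<And>a. S a \<Longrightarrow> 0 \<le> cost a"
    and q: "q \<in> Q'" "Q' \<subseteq> Q" and least: "\<forall>p\<in>Q'. D q \<le> D p"
  shows "case C q of
      None \<Rightarrow> \<not> (\<exists>a. S a \<and> rt a \<in> Q')
    | Some c \<Rightarrow> S c \<and> rt c = q \<and> (\<forall>a. S a \<and> rt a \<in> Q' \<longrightarrow> cost c \<le> cost a)"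
proof (cases "C q")
  case None
  have "rt a \<notin> Q'" if "S a" for a
  proof
    assume "rt a \<in> Q'"
    then have "D (rt a) = \<infinity>" using least unattained[OF None] by (simp add: top_unique)
    then show False using lower[OF that] by (simp add: top_unique)
  qed
  then show ?thesis using None by auto
next
  case (Some c)
  then have c: "S c" "rt c = q" "ennreal (cost c) = D q" using attained q by auto
  have "cost c \<le> cost a" if "S a" "rt a \<in> Q'" for a
  proof -
    have "ennreal (cost c) \<le> ennreal (cost a)"
      using c(3) least that(2) lower[OF that(1)] by (metis order_trans)
    then show ?thesis using nonneg[OF that(1)] by (simp add: ennreal_le_iff)
  qed
  then show ?thesis using Some c by auto
qed

lemma best_two_candidates:
  fixes cost :: "'a \<Rightarrow> real" and D :: "'q \<Rightarrow> ennreal"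
  assumes lower: "\<And>a. S a \<Longrightarrow> rt a \<in> Q \<and> D (rt a) \<le> ennreal (cost a)"
    and attained: "\<And>p c. p \<in> Q \<Longrightarrow> C p = Some c \<Longrightarrow> S c \<and> rt c = p \<and> ennreal (cost c) = D p"
    and unattained: "\<And>p. C p = None \<Longrightarrow> D p = \<infinity>"
    and nonneg: "\<And>a. S a \<Longrightarrow> 0 \<le> cost a"
    and best: "qs \<in> Q" "\<forall>q\<in>Q. D qs \<le> D q" "C qs = Some A"
    and second: "(Q = {qs} \<and> B = None) \<or>
      (\<exists>q'. q' \<in> Q \<and> q' \<noteq> qs \<and> (\<forall>q\<in>Q - {qs}. D q' \<le> D q) \<and> B = C q')"
  shows "(S A \<and> (\<forall>a. S a \<longrightarrow> cost A \<le> cost a)) \<and>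
    (case B of
      None \<Rightarrow> \<not> (\<exists>b. S b \<and> rt b \<noteq> rt A)
    | Some b0 \<Rightarrow> S b0 \<and> rt b0 \<noteq> rt A \<and> (\<forall>b. S b \<and> rt b \<noteq> rt A \<longrightarrow> cost b0 \<le> cost b))"
proof -
  have least: "case C q of
      None \<Rightarrow> \<not> (\<exists>a. S a \<and> rt a \<in> Q')
    | Some c \<Rightarrow> S c \<and> rt c = q \<and> (\<forall>a. S a \<and> rt a \<in> Q' \<longrightarrow> cost c \<le> cost a)"
    if "q \<in> Q'" "Q' \<subseteq> Q" "\<forall>p\<in>Q'. D q \<le> D p" for q Q'
    by (rule least_candidate_optimal[where Q = Q and D = D])
      (use lower attained unattained nonneg that in blast)+
  have A: "S A" "rt A = qs" "\<forall>a. S a \<longrightarrow> cost A \<le> cost a"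
    using least[OF best(1) order.refl best(2)] best(3) lower by fastforce+
  have roots: "rt a \<in> Q - {qs} \<longleftrightarrow> rt a \<noteq> rt A" if "S a" for a
    using lower[OF that] A(2) by auto
  from second have "case B of
      None \<Rightarrow> \<not> (\<exists>b. S b \<and> rt b \<noteq> rt A)
    | Some b0 \<Rightarrow> S b0 \<and> rt b0 \<noteq> rt A \<and> (\<forall>b. S b \<and> rt b \<noteq> rt A \<longrightarrow> cost b0 \<le> cost b)"
  proof
    assume "Q = {qs} \<and> B = None"
    then show ?thesis using roots by auto
  next
    assume "\<exists>q'. q' \<in> Q \<and> q' \<noteq> qs \<and> (\<forall>q\<in>Q - {qs}. D q' \<le> D q) \<and> B = C q'"
    then obtain q' where q': "q' \<in> Q - {qs}" "\<forall>q\<in>Q - {qs}. D q' \<le> D q" and B: "B = C q'"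
      by blast
    show ?thesis
      using least[OF q'(1) Diff_subset q'(2)] q'(1) roots A(2) unfolding B by (auto split: option.splits)
  qed
  with A show ?thesis by blast
qed

lemma ex_second_best:
  fixes E :: "'q \<Rightarrow> 'b::linorder"
  assumes "finite Q" and "qs \<in> Q"
  shows "\<exists>B. (Q = {qs} \<and> B = None) \<or> (\<exists>q'. q' \<in> Q \<and> q' \<noteq> qs \<and> (\<forall>q\<in>Q - {qs}. E q' \<le> E q) \<and> B = C q')"
proof (cases "Q = {qs}")
  case False
  then have Q': "finite (Q - {qs})" "Q - {qs} \<noteq> {}" using assms by auto
  show ?thesis
    using arg_min_if_finite(1)[OF Q', of E] arg_min_least[OF Q', of _ E] by blast
qed simp

locale monotone_cost =
  fixes phi :: "'i cterm list \<Rightarrow> 'i \<Rightarrow> real \<Rightarrow> real" and opl :: "real \<Rightarrow> real \<Rightarrow> real"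
  assumes phi_nonneg: "0 \<le> x \<Longrightarrow> 0 \<le> phi P q x"
    and phi_mono: "0 \<le> x \<Longrightarrow> x \<le> y \<Longrightarrow> phi P q x \<le> phi P q y"
    and opl_nonneg: "0 \<le> x \<Longrightarrow> 0 \<le> y \<Longrightarrow> 0 \<le> opl x y"
    and opl_mono: "0 \<le> x \<Longrightarrow> x \<le> x' \<Longrightarrow> 0 \<le> y \<Longrightarrow> y \<le> y' \<Longrightarrow> opl x y \<le> opl x' y'"
begin

lemma cost_nonneg: "0 \<le> tcost phi opl L A"
  using tcost_nonneg phi_nonneg opl_nonneg by blast

lemma combine_mono:
  assumes "tcost phi opl X ax \<le> tcost phi opl X ax'" and "tcost phi opl Y ay \<le> tcost phi opl Y ay'"
  shows "opl (phi P q (tcost phi opl X ax)) (tcost phi opl Y ay)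
       \<le> opl (phi P q (tcost phi opl X ax')) (tcost phi opl Y ay')"
  using assms by (intro opl_mono phi_mono phi_nonneg cost_nonneg)

lemma dval_le_tcost:
  assumes path: "is_path L" and L: "L = t # ts"
    and sub: "\<And>q s. q \<in> U t \<Longrightarrow> 1 \<le> s \<Longrightarrow> s \<le> kof L q \<Longrightarrow>
       optimal_pair phi opl (Xof L q s) (AX q s) (BX q s) \<and> optimal_pair phi opl (Yof L s) (AbY q s) (BbY q s)"
    and A: "is_loop_order L A"
  obtains s where "root A \<in> U t" "1 \<le> s" "s \<le> kof L (root A)"
    "dval phi opl L (root A) s (AX (root A) s) (adjY (root A) (Yof L s) (AbY (root A) s) (BbY (root A) s))
       \<le> ennreal (tcost phi opl L A)"
proof -
  obtain q r where q: "q = root A" "q \<in> U t" "1 \<le> r" "r \<le> kof L q"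
    and X: "list_all2 lists_indices (Xof L q r) (filter (\<lambda>b. b \<noteq> []) (map tl (take r A)))"
    and Y: "list_all2 lists_indices (Yof L r) (drop r A)"
    and Y_root: "Yof L r \<noteq> [] \<Longrightarrow> root (drop r A) \<noteq> q"
    and cost: "tcost phi opl L A = opl (phi (take r L) q (tcost phi opl (Xof L q r)
        (filter (\<lambda>b. b \<noteq> []) (map tl (take r A))))) (tcost phi opl (Yof L r) (drop r A))"
    using loop_order_peel[OF A[unfolded is_loop_order_iff_list_all2] L path, where phi = phi and opl = opl]
    by blast
  have optX: "optimal_pair phi opl (Xof L q r) (AX q r) (BX q r)"
    and optY: "optimal_pair phi opl (Yof L r) (AbY q r) (BbY q r)"
    using sub q by blast+
  have X_le: "tcost phi opl (Xof L q r) (AX q r)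
      \<le> tcost phi opl (Xof L q r) (filter (\<lambda>b. b \<noteq> []) (map tl (take r A)))"
    using optX X unfolding optimal_pair_def is_loop_order_iff_list_all2 by blast
  obtain ay where ay: "adjY q (Yof L r) (AbY q r) (BbY q r) = Some ay"
    "tcost phi opl (Yof L r) ay \<le> tcost phi opl (Yof L r) (drop r A)"
    using optimal_pair_adjY[OF optY, of q] Y Y_root unfolding is_loop_order_iff_list_all2
    by (auto split: option.splits)
  have "dval phi opl L q r (AX q r) (adjY q (Yof L r) (AbY q r) (BbY q r)) \<le> ennreal (tcost phi opl L A)"
    unfolding ay(1) dval_def cost using combine_mono[OF X_le ay(2)] by (simp add: ennreal_leI)
  then show ?thesis using that q by blast
qed

lemma ORDER_optimal: "ORDER phi opl L A B \<Longrightarrow> is_path L \<Longrightarrow> optimal_pair phi opl L A B"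
proof (induction rule: ORDER.induct)
  case ORDER_Nil
  show ?case unfolding optimal_pair_def is_loop_order_iff_list_all2 by auto
next
  case (ORDER_Cons L t ts AX BX AbY BbY sq qs A B)
  note path = ORDER_Cons.prems
  define D where "D q = dval phi opl L q (sq q) (AX q (sq q))
    (adjY q (Yof L (sq q)) (AbY q (sq q)) (BbY q (sq q)))" for q
  define C where "C q = cand L q (sq q) (AX q (sq q))
    (adjY q (Yof L (sq q)) (AbY q (sq q)) (BbY q (sq q)))" for q
  have sub: "optimal_pair phi opl (Xof L q s) (AX q s) (BX q s) \<and>
      optimal_pair phi opl (Yof L s) (AbY q s) (BbY q s)" if "q \<in> U t" "1 \<le> s" "s \<le> kof L q" for q s
    using ORDER_Cons.IH that is_path_Xof[OF path] is_path_Yof[OF path] by blast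
  have lower: "root A' \<in> U t \<and> D (root A') \<le> ennreal (tcost phi opl L A')"
    if A': "is_loop_order L A'" for A'
  proof -
    obtain s where "root A' \<in> U t" "1 \<le> s" "s \<le> kof L (root A')"
      "dval phi opl L (root A') s (AX (root A') s)
         (adjY (root A') (Yof L s) (AbY (root A') s) (BbY (root A') s)) \<le> ennreal (tcost phi opl L A')"
      using dval_le_tcost[OF path ORDER_Cons(1), of AX BX AbY BbY A'] sub A' by blast
    then show ?thesis using ORDER_Cons(2) unfolding D_def by (meson order_trans)
  qed
  have attained: "is_loop_order L c \<and> root c = q \<and> ennreal (tcost phi opl L c) = D q"
    if "q \<in> U t" "C q = Some c" for q c
  proof -
    have s: "1 \<le> sq q" "sq q \<le> kof L q" using ORDER_Cons(2) that(1) by auto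
    show ?thesis
      using candidate_attains_dval[OF s _ _ that(2)[unfolded C_def]] sub[OF that(1) s]
      unfolding optimal_pair_def D_def by auto
  qed
  have unattained: "D q = \<infinity>" if "C q = None" for q
    using that unfolding C_def D_def cand_def dval_def by (auto split: option.splits)
  have qs_least: "\<forall>q\<in>U t. D qs \<le> D q" unfolding D_def by (rule ORDER_Cons(4))
  have C_qs: "C qs = Some A" unfolding C_def by (rule ORDER_Cons(5))
  show ?case unfolding optimal_pair_def
    using ORDER_Cons(3) qs_least C_qs ORDER_Cons(6)[folded D_def C_def]
    by (rule best_two_candidates[where D = D and Q = "U t" and C = C, rotated 4])
      (use lower attained unattained cost_nonneg in blast)+
qed

lemma dval_kof_finite:
  assumes "is_path L" and "ORDER phi opl (Yof L (kof L q)) Ab Bb"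
  shows "dval phi opl L q (kof L q) AX (adjY q (Yof L (kof L q)) Ab Bb) \<noteq> \<infinity>"
proof -
  have "is_loop_order (Yof L (kof L q)) Ab"
    using ORDER_optimal[OF assms(2) is_path_Yof[OF assms(1)]] unfolding optimal_pair_def by blast
  then show ?thesis unfolding dval_def by (simp add: adjY_Yof_kof[OF assms(1)])
qed

lemma ORDER_Cons_exists:
  assumes path: "is_path L" and L: "L = t # ts"
    and sub: "\<And>q s. q \<in> U t \<Longrightarrow> 1 \<le> s \<Longrightarrow> s \<le> kof L q \<Longrightarrow>
      (\<exists>a b. ORDER phi opl (Xof L q s) a b) \<and> (\<exists>a b. ORDER phi opl (Yof L s) a b)"
  shows "\<exists>A B. ORDER phi opl L A B"
proof -
  have "\<forall>q s. \<exists>ax bx ab bb. q \<in> U t \<and> 1 \<le> s \<and> s \<le> kof L q \<longrightarrow>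
      ORDER phi opl (Xof L q s) ax bx \<and> ORDER phi opl (Yof L s) ab bb"
    using sub by blast
  then obtain AX BX AbY BbY where ord: "\<forall>q s. q \<in> U t \<and> 1 \<le> s \<and> s \<le> kof L q \<longrightarrow>
      ORDER phi opl (Xof L q s) (AX q s) (BX q s) \<and> ORDER phi opl (Yof L s) (AbY q s) (BbY q s)"
    by metis
  define D where "D q s = dval phi opl L q s (AX q s) (adjY q (Yof L s) (AbY q s) (BbY q s))" for q s
  define sq where "sq q = arg_min_on (D q) {1..kof L q}" for q
  define E where "E q = D q (sq q)" for q
  define qs where "qs = arg_min_on E (U t)"
  have kof_ne: "{1..kof L q} \<noteq> {}" if "q \<in> U t" for q using that L unfolding kof_def by simp
  have sq: "\<forall>q\<in>U t. 1 \<le> sq q \<and> sq q \<le> kof L q \<and> (\<forall>s. 1 \<le> s \<and> s \<le> kof L q \<longrightarrow> D q (sq q) \<le> D q s)"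
    using arg_min_if_finite(1)[OF finite_atLeastAtMost kof_ne] arg_min_least[OF finite_atLeastAtMost kof_ne]
    unfolding sq_def by fastforce
  have U: "finite (U t)" "U t \<noteq> {}" using is_path_U[OF path] L by auto
  have qs: "qs \<in> U t" "\<forall>q\<in>U t. E qs \<le> E q"
    using arg_min_if_finite(1)[OF U] arg_min_least[OF U] unfolding qs_def by auto
  \<comment> \<open>with s = kof L q the remainder Y starts with a term not containing q, so this candidate
    is always defined; hence so is the best one\<close>
  obtain q where q: "q \<in> U t" using U by blast
  then have "E qs \<le> D q (kof L q)" using qs(2) sq unfolding E_def by (meson order.refl order_trans)
  moreover have "D q (kof L q) \<noteq> \<infinity>"
    unfolding D_def by (rule dval_kof_finite[OF path]) (use ord sq q in fastforce)
  ultimately have "E qs \<noteq> \<infinity>" by (auto simp: top_unique)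
  then obtain A where A: "cand L qs (sq qs) (AX qs (sq qs))
      (adjY qs (Yof L (sq qs)) (AbY qs (sq qs)) (BbY qs (sq qs))) = Some A"
    unfolding E_def D_def dval_def cand_def by (auto split: option.splits)
  obtain B where "(U t = {qs} \<and> B = None) \<or> (\<exists>q'. q' \<in> U t \<and> q' \<noteq> qs \<and>
      (\<forall>q\<in>U t - {qs}. E q' \<le> E q) \<and>
      B = cand L q' (sq q') (AX q' (sq q')) (adjY q' (Yof L (sq q')) (AbY q' (sq q')) (BbY q' (sq q'))))"
    using ex_second_best[OF U(1) qs(1), where E = E and C = "\<lambda>q'. cand L q' (sq q') (AX q' (sq q'))
      (adjY q' (Yof L (sq q')) (AbY q' (sq q')) (BbY q' (sq q')))"] by blast
  then have "ORDER phi opl L A B"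
    by (intro ORDER_Cons[OF L ord sq[unfolded D_def] qs(1) qs(2)[unfolded E_def D_def] A])
      (simp add: E_def D_def)
  then show ?thesis by blast
qed

lemma ORDER_exists: "is_path L \<Longrightarrow> \<exists>A B. ORDER phi opl L A B"
proof (induction "index_count L" arbitrary: L rule: less_induct)
  case less
  show ?case
  proof (cases L)
    case Nil
    then show ?thesis using ORDER_Nil by blast
  next
    case (Cons t ts)
    show ?thesis
    proof (rule ORDER_Cons_exists[OF less.prems Cons])
      fix q s assume s: "q \<in> U t" "1 \<le> s" "s \<le> kof L q"
      then have "s \<le> length L" using kof_le_length[of L q] by linarith
      then show "(\<exists>a b. ORDER phi opl (Xof L q s) a b) \<and> (\<exists>a b. ORDER phi opl (Yof L s) a b)"
        using less.hyps[OF index_count_Xof_less[OF less.prems s(2,3)] is_path_Xof[OF less.prems]]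
          less.hyps[OF index_count_Yof_less[OF less.prems s(2)] is_path_Yof[OF less.prems]] by blast
    qed
  qed
qed

end

theorem mainTheorem1:
  fixes phi :: "'i cterm list \<Rightarrow> 'i \<Rightarrow> real \<Rightarrow> real"
    and opl :: "real \<Rightarrow> real \<Rightarrow> real"
    and L :: "'i cterm list"
  assumes path: "is_path L"
    and phi_nonneg: "\<forall>P q x. 0 \<le> x \<longrightarrow> 0 \<le> phi P q x"
    and phi_mono: "\<forall>P q x y. 0 \<le> x \<and> x \<le> y \<longrightarrow> phi P q x \<le> phi P q y"
    and opl_nonneg: "\<forall>x y. 0 \<le> x \<and> 0 \<le> y \<longrightarrow> 0 \<le> opl x y"
    and opl_assoc: "\<forall>x y z. 0 \<le> x \<and> 0 \<le> y \<and> 0 \<le> z \<longrightarrow> opl (opl x y) z = opl x (opl y z)"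
    and opl_mono: "\<forall>x x' y y'. 0 \<le> x \<and> x \<le> x' \<and> 0 \<le> y \<and> y \<le> y' \<longrightarrow> opl x y \<le> opl x' y'"
    and opl_zero: "\<forall>x. 0 \<le> x \<longrightarrow> opl 0 x = x \<and> opl x 0 = x"
  shows "(\<exists>A B. ORDER phi opl L A B) \<and>
         (\<forall>A B. ORDER phi opl L A B \<longrightarrow>
            (is_loop_order L A \<and>
             (\<forall>A'. is_loop_order L A' \<longrightarrow> tcost phi opl L A \<le> tcost phi opl L A')) \<and>
            (case B of
               None \<Rightarrow> \<not> (\<exists>B'. is_loop_order L B' \<and> root B' \<noteq> root A)
             | Some B0 \<Rightarrow> is_loop_order L B0 \<and> root B0 \<noteq> root A \<and>
                 (\<forall>B'. is_loop_order L B' \<and> root B' \<noteq> root A \<longrightarrow>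
                    tcost phi opl L B0 \<le> tcost phi opl L B')))"
proof -
  \<comment> \<open>only nonnegativity and monotonicity are used; associativity and the identity 0 are not\<close>
  interpret monotone_cost phi opl
    by unfold_locales (simp_all add: phi_nonneg phi_mono opl_nonneg opl_mono)
  show ?thesis
    unfolding optimal_pair_def[symmetric] using ORDER_exists[OF path] ORDER_optimal[OF _ path] by blast
qed

end
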